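(* Let $n$ be an odd positive integer and let $\mathcal{B}$ be a balanced bipartite graph on $2n$ vertices with parts $V_1$ and $V_2$ such that $\delta(\mathcal{B})\geq\frac{n}{2}+1$. Let $S\subseteq V(\mathcal{B})$ with $|S|=n+1$. Then $\mathcal{B}[S]$ is a forest if and only if $\min\{|S\cap V_1|,|S\cap V_2|\}=1$.
   Context: All graphs are finite and simple. A balanced bipartite graph on $2n$ vertices is a bipartite graph with a given bipartition $(V_1,V_2)$ where $|V_1|=|V_2|=n$. $\delta(G)$ denotes the minimum degree of $G$, and $G[S]$ the subgraph induced by $S\subseteq V(G)$. *)

theory Defs
  imports Complex_Main
begin

definition simple_graph :: "'a set \<Rightarrow> ('a \<Rightarrow> 'a \<Rightarrow> bool) \<Rightarrow> bool" where
  "simple_graph V E \<longleftrightarrow> finite V \<and> (\<forall>u v. E u v \<longrightarrow> E v u) \<and> (\<forall>v. \<not> E v v)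
     \<and> (\<forall>u v. E u v \<longrightarrow> u \<in> V \<and> v \<in> V)"

definition balanced_bipartite :: "nat \<Rightarrow> 'a set \<Rightarrow> 'a set \<Rightarrow> ('a \<Rightarrow> 'a \<Rightarrow> bool) \<Rightarrow> bool" where
  "balanced_bipartite n V1 V2 E \<longleftrightarrow> simple_graph (V1 \<union> V2) E \<and> V1 \<inter> V2 = {}
     \<and> card V1 = n \<and> card V2 = n
     \<and> (\<forall>u v. E u v \<longrightarrow> (u \<in> V1 \<and> v \<in> V2) \<or> (u \<in> V2 \<and> v \<in> V1))"

definition degree :: "'a set \<Rightarrow> ('a \<Rightarrow> 'a \<Rightarrow> bool) \<Rightarrow> 'a \<Rightarrow> nat" where
  "degree V E v = card {u \<in> V. E v u}"

definition min_degree :: "'a set \<Rightarrow> ('a \<Rightarrow> 'a \<Rightarrow> bool) \<Rightarrow> nat" where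
  "min_degree V E = Min (degree V E ` V)"

definition is_cycle :: "'a set \<Rightarrow> ('a \<Rightarrow> 'a \<Rightarrow> bool) \<Rightarrow> 'a list \<Rightarrow> bool" where
  "is_cycle V E cs \<longleftrightarrow> length cs \<ge> 3 \<and> distinct cs \<and> set cs \<subseteq> V
     \<and> (\<forall>i < length cs - 1. E (cs ! i) (cs ! Suc i)) \<and> E (last cs) (hd cs)"

definition induced_forest :: "('a \<Rightarrow> 'a \<Rightarrow> bool) \<Rightarrow> 'a set \<Rightarrow> bool" where
  "induced_forest E S \<longleftrightarrow> \<not> (\<exists>cs. is_cycle S (\<lambda>u v. u \<in> S \<and> v \<in> S \<and> E u v) cs)"

end

(* If both parts of S contain at least two vertices, G[S] has a cycle: an acyclic graph on the
   n + 1 vertices of S has at most n edges (remove leaves, which exist at the ends of longest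
   paths), whereas each vertex of the smaller part S \<inter> X has at least \<delta> - (n - |S \<inter> Y|)
   neighbours in S \<inter> Y, and for n odd 2\<delta> \<ge> n + 3, which yields more than n edges.
   Conversely, every cycle of a bipartite graph alternates between the parts and so meets each
   of them twice; hence G[S] is acyclic when one part of S is a single vertex. *)

theory Submission imports Defs begin

definition is_path :: "'a set \<Rightarrow> ('a \<Rightarrow> 'a \<Rightarrow> bool) \<Rightarrow> 'a list \<Rightarrow> bool" where
  "is_path W R ps \<longleftrightarrow> ps \<noteq> [] \<and> distinct ps \<and> set ps \<subseteq> W
     \<and> (\<forall>i < length ps - 1. R (ps ! i) (ps ! Suc i))"

lemma is_path_length_le_card: "finite W \<Longrightarrow> is_path W R ps \<Longrightarrow> length ps \<le> card W"
  unfolding is_path_def by (metis card_mono distinct_card)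

lemma is_path_snoc:
  assumes "is_path W R ps" "u \<in> W" "u \<notin> set ps" "R (last ps) u"
  shows "is_path W R (ps @ [u])"
  unfolding is_path_def
proof (intro conjI allI impI)
  fix i assume i: "i < length (ps @ [u]) - 1"
  show "R ((ps @ [u]) ! i) ((ps @ [u]) ! Suc i)"
  proof (cases "Suc i < length ps")
    case True
    then show ?thesis using assms(1) by (simp add: is_path_def nth_append)
  next
    case False
    then have "i = length ps - 1" using i by simp
    then show ?thesis using assms(1,4) False by (simp add: is_path_def nth_append last_conv_nth)
  qed
qed (use assms in \<open>auto simp: is_path_def\<close>)

lemma ex_path_containing_end_neighbours:
  assumes "finite W" "W \<noteq> {}"
  shows "\<exists>ps. is_path W R ps \<and> {u \<in> W. R (last ps) u} \<subseteq> set ps"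
proof -
  obtain w where "w \<in> W" using assms(2) by blast
  then have "is_path W R [w]" by (simp add: is_path_def)
  then obtain ps where ps: "is_path W R ps"
    and longest: "\<And>qs. is_path W R qs \<Longrightarrow> length qs \<le> length ps"
    using Lattices_Big.ex_has_greatest_nat[of "is_path W R" _ length "Suc (card W)"]
      is_path_length_le_card[OF assms(1)] by (metis less_Suc_eq_le)
  have "u \<in> set ps" if "u \<in> W" "R (last ps) u" for u
    using longest[OF is_path_snoc[OF ps that(1) _ that(2)]] by fastforce
  with ps show ?thesis by blast
qed

lemma is_cycle_drop:
  assumes "is_path W R ps" "j + 3 \<le> length ps" "R (last ps) (ps ! j)"
  shows "is_cycle W R (drop j ps)"
  using assms unfolding is_path_def is_cycle_def
proof (intro conjI allI impI)
  show "set (drop j ps) \<subseteq> W" using assms(1) set_drop_subset unfolding is_path_def by fast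
  show "R (last (drop j ps)) (hd (drop j ps))" using assms(2,3) by (simp add: last_drop hd_drop_conv_nth)
qed (auto simp: is_path_def)

lemma ex_cycle_if_degree_ge_2:
  assumes "finite W" "W \<noteq> {}" "\<forall>v. \<not> R v v" "\<forall>v\<in>W. 2 \<le> card {u \<in> W. R v u}"
  shows "\<exists>cs. is_cycle W R cs"
proof -
  obtain ps where ps: "is_path W R ps" and closed: "{u \<in> W. R (last ps) u} \<subseteq> set ps"
    using ex_path_containing_end_neighbours[OF assms(1,2)] by blast
  define L where "L = length ps"
  have "last ps \<in> W" "last ps = ps ! (L - 1)"
    using ps unfolding is_path_def L_def by (auto simp: last_conv_nth)
  then have "2 \<le> card {u \<in> W. R (last ps) u}" using assms(4) by blast
  then have "\<not> {u \<in> W. R (last ps) u} \<subseteq> {ps ! (L - 2)}"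
    using card_mono[of "{ps ! (L - 2)}" "{u \<in> W. R (last ps) u}"] by auto
  \<comment> \<open>a neighbour of the end of the path other than its predecessor closes a cycle\<close>
  then obtain u where u: "u \<in> W" "R (last ps) u" "u \<noteq> ps ! (L - 2)" by blast
  with closed have "u \<in> set ps" by blast
  then obtain j where j: "j < L" "ps ! j = u" by (auto simp: L_def in_set_conv_nth)
  have "j \<noteq> L - 1" using u(2) j(2) \<open>last ps = ps ! (L - 1)\<close> assms(3) by auto
  moreover have "j \<noteq> L - 2" using j(2) u(3) by blast
  ultimately have "j + 3 \<le> L" using j(1) by linarith
  then show ?thesis using is_cycle_drop[OF ps] u(2) j(2) L_def by blast
qed

lemma is_cycle_subset: "is_cycle W' R cs \<Longrightarrow> W' \<subseteq> W \<Longrightarrow> is_cycle W R cs"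
  unfolding is_cycle_def by auto

definition cut_edges :: "'a set \<Rightarrow> ('a \<Rightarrow> 'a \<Rightarrow> bool) \<Rightarrow> 'a set \<Rightarrow> ('a \<times> 'a) set" where
  "cut_edges W R A = (SIGMA x:W \<inter> A. {u \<in> W - A. R x u})"

lemma finite_cut_edges [simp]: "finite W \<Longrightarrow> finite (cut_edges W R A)"
  by (simp add: cut_edges_def)

lemma card_cut_edges_remove_leaf:
  assumes "finite W" "\<forall>u v. R u v \<longrightarrow> R v u" "card {u \<in> W. R v u} \<le> 1"
  shows "card (cut_edges W R A) \<le> card (cut_edges (W - {v}) R A) + 1"
proof -
  define D where "D = (if v \<in> A then {v} \<times> {u \<in> W. R v u} else {u \<in> W. R v u} \<times> {v})"
  have "finite D" "card D \<le> 1" using assms(1,3) by (simp_all add: D_def card_cartesian_product)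
  have "cut_edges W R A \<subseteq> cut_edges (W - {v}) R A \<union> D"
    using assms(2) by (auto simp: cut_edges_def D_def)
  then have "card (cut_edges W R A) \<le> card (cut_edges (W - {v}) R A \<union> D)"
    using assms(1) \<open>finite D\<close> by (intro card_mono) auto
  also have "\<dots> \<le> card (cut_edges (W - {v}) R A) + card D" by (rule card_Un_le)
  finally show ?thesis using \<open>card D \<le> 1\<close> by linarith
qed

lemma card_cut_edges_less_if_acyclic:
  assumes "finite W" "W \<noteq> {}" "\<forall>u v. R u v \<longrightarrow> R v u" "\<forall>v. \<not> R v v"
    "\<nexists>cs. is_cycle W R cs"
  shows "card (cut_edges W R A) < card W"
  using assms
proof (induction "card W" arbitrary: W rule: less_induct)
  case less
  obtain v where v: "v \<in> W" "card {u \<in> W. R v u} \<le> 1"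
    using ex_cycle_if_degree_ge_2[of W R] less.prems by force
  show ?case
  proof (cases "W - {v} = {}")
    case True
    then have "cut_edges W R A = {}" by (auto simp: cut_edges_def)
    then show ?thesis using v(1) less.prems(1) by (auto simp: card_gt_0_iff)
  next
    case False
    have smaller: "card (W - {v}) < card W" using less.prems(1) v(1) by (rule card_Diff1_less)
    moreover have "\<nexists>cs. is_cycle (W - {v}) R cs" using less.prems(5) is_cycle_subset by blast
    ultimately have "card (cut_edges (W - {v}) R A) < card (W - {v})"
      using less False by simp
    then show ?thesis
      using card_cut_edges_remove_leaf[OF less.prems(1,3) v(2), of A] smaller by linarith
  qed
qed

lemma card_cycle_Int_ge_2:
  assumes cyc: "is_cycle W R cs" and cross: "\<forall>u v. R u v \<longrightarrow> (u \<in> X \<longleftrightarrow> v \<notin> X)"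
  shows "2 \<le> card (set cs \<inter> X)"
proof -
  define L where "L = length cs"
  have L: "3 \<le> L" and "distinct cs" and adj: "\<forall>i < L - 1. R (cs ! i) (cs ! Suc i)"
    using cyc unfolding is_cycle_def L_def by auto
  have "cs \<noteq> []" using L by (auto simp: L_def)
  then have "last cs = cs ! (L - 1)" "hd cs = cs ! 0"
    by (simp_all add: L_def last_conv_nth hd_conv_nth)
  then have closing: "R (cs ! (L - 1)) (cs ! 0)" using cyc unfolding is_cycle_def by simp
  have R01: "R (cs ! 0) (cs ! 1)" and R12: "R (cs ! 1) (cs ! 2)"
    using adj L by (auto simp: numeral_2_eq_2)
  have "\<exists>i j. i < L \<and> j < L \<and> i \<noteq> j \<and> cs ! i \<in> X \<and> cs ! j \<in> X"
  proof (cases "cs ! 1 \<in> X")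
    case True
    then have "cs ! (L - 1) \<in> X" using R01 closing cross by blast
    with True L show ?thesis by (intro exI[of _ 1] exI[of _ "L - 1"]) auto
  next
    case False
    then have "cs ! 0 \<in> X" "cs ! 2 \<in> X" using R01 R12 cross by blast+
    with L show ?thesis by (intro exI[of _ 0] exI[of _ 2]) auto
  qed
  then obtain i j where "i < L" "j < L" "i \<noteq> j" "cs ! i \<in> X" "cs ! j \<in> X" by blast
  then have "{cs ! i, cs ! j} \<subseteq> set cs \<inter> X" "cs ! i \<noteq> cs ! j"
    using \<open>distinct cs\<close> by (auto simp: L_def nth_eq_iff_index_eq)
  then show ?thesis using card_mono[of "set cs \<inter> X" "{cs ! i, cs ! j}"] by auto
qed

lemma balanced_bipartite_swap:
  "balanced_bipartite n V1 V2 E \<Longrightarrow> balanced_bipartite n V2 V1 E"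
  unfolding balanced_bipartite_def by (auto simp: Un_commute Int_commute)

lemma balanced_bipartite_finite:
  "balanced_bipartite n V1 V2 E \<Longrightarrow> finite (V1 \<union> V2)"
  unfolding balanced_bipartite_def simple_graph_def by blast

lemma balanced_bipartite_edge_crosses:
  "balanced_bipartite n V1 V2 E \<Longrightarrow> E u v \<Longrightarrow> u \<in> V1 \<longleftrightarrow> v \<notin> V1"
  unfolding balanced_bipartite_def by blast

lemma card_Int_parts:
  assumes "balanced_bipartite n V1 V2 E" "S \<subseteq> V1 \<union> V2"
  shows "card (S \<inter> V1) + card (S \<inter> V2) = card S"
proof -
  have "finite S" using assms balanced_bipartite_finite finite_subset by blast
  moreover have "V1 \<inter> V2 = {}" using assms(1) unfolding balanced_bipartite_def by blast
  ultimately have "card ((S \<inter> V1) \<union> (S \<inter> V2)) = card (S \<inter> V1) + card (S \<inter> V2)"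
    by (intro card_Un_disjoint) auto
  moreover have "(S \<inter> V1) \<union> (S \<inter> V2) = S" using assms(2) by blast
  ultimately show ?thesis by simp
qed

lemma min_degree_le_degree: "finite V \<Longrightarrow> v \<in> V \<Longrightarrow> min_degree V E \<le> degree V E v"
  unfolding min_degree_def by simp

lemma degree_le_neighbours_in_plus_outside:
  assumes bb: "balanced_bipartite n V1 V2 E" and "x \<in> V1" "S \<subseteq> V1 \<union> V2"
  shows "degree (V1 \<union> V2) E x \<le> card {u \<in> S - V1. E x u} + (n - card (S \<inter> V2))"
proof -
  have "finite S" using assms(3) balanced_bipartite_finite[OF bb] by (rule finite_subset)
  then have fin: "finite V2" "finite {u \<in> S - V1. E x u}"
    using balanced_bipartite_finite[OF bb] by auto
  have "{u \<in> V1 \<union> V2. E x u} \<subseteq> {u \<in> S - V1. E x u} \<union> (V2 - S)"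
    using bb \<open>x \<in> V1\<close> unfolding balanced_bipartite_def by auto
  then have "degree (V1 \<union> V2) E x \<le> card ({u \<in> S - V1. E x u} \<union> (V2 - S))"
    unfolding degree_def using fin by (intro card_mono) auto
  also have "\<dots> \<le> card {u \<in> S - V1. E x u} + card (V2 - S)" by (rule card_Un_le)
  also have "card (V2 - S) = n - card (S \<inter> V2)"
    using bb fin(1) by (simp add: balanced_bipartite_def card_Diff_subset_Int Int_commute)
  finally show ?thesis .
qed

lemma parts_ge_2_arith:
  fixes a b m n :: nat
  assumes "a + b = n + 1" "2 \<le> a" "a \<le> b" "n + 3 \<le> 2 * m"
  shows "n + a * n < a * (m + b)"
proof -
  have n_eq: "int n = int a + int b - 1" using assms(1) by linarith
  have "0 \<le> (int b - int a) * (int a - 2)" using assms(2,3) by simp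
  then have "int (2 * (n + a * n) + 2) \<le> int (a * (n + 3 + 2 * b))"
    unfolding of_nat_add of_nat_mult of_nat_numeral n_eq by (simp add: algebra_simps)
  then have "2 * (n + a * n) + 2 \<le> a * (n + 3 + 2 * b)" by (simp only: of_nat_le_iff)
  also have "\<dots> \<le> a * (2 * m + 2 * b)" using assms(4) by simp
  finally show ?thesis by (simp add: algebra_simps)
qed

lemma not_induced_forest_if_smaller_part_ge_2:
  assumes bb: "balanced_bipartite n X Y E" and deg: "n + 3 \<le> 2 * min_degree (X \<union> Y) E"
    and S: "S \<subseteq> X \<union> Y" "card S = n + 1"
    and a: "2 \<le> card (S \<inter> X)" "card (S \<inter> X) \<le> card (S \<inter> Y)"
  shows "\<not> induced_forest E S"
proof
  assume forest: "induced_forest E S"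
  define R where "R = (\<lambda>u v. u \<in> S \<and> v \<in> S \<and> E u v)"
  define m where "m = min_degree (X \<union> Y) E"
  have fin: "finite (X \<union> Y)" "finite S"
    using balanced_bipartite_finite[OF bb] S(1) finite_subset by auto
  have "card (cut_edges S R X) < card S"
  proof (rule card_cut_edges_less_if_acyclic)
    show "S \<noteq> {}" using S(2) by auto
    show "\<forall>u v. R u v \<longrightarrow> R v u" "\<forall>v. \<not> R v v"
      using bb unfolding R_def balanced_bipartite_def simple_graph_def by auto
    show "\<nexists>cs. is_cycle S R cs" using forest unfolding induced_forest_def R_def .
  qed (fact fin(2))
  moreover have "card (cut_edges S R X) = (\<Sum>x\<in>S \<inter> X. card {u \<in> S - X. R x u})"
    unfolding cut_edges_def using fin(2) by (intro card_SigmaI) auto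
  moreover have "m + card (S \<inter> Y) \<le> card {u \<in> S - X. R x u} + n" if "x \<in> S \<inter> X" for x
  proof -
    have "m \<le> degree (X \<union> Y) E x" using fin(1) that S(1) unfolding m_def
      by (intro min_degree_le_degree) auto
    moreover have "{u \<in> S - X. R x u} = {u \<in> S - X. E x u}" using that by (auto simp: R_def)
    moreover have "card (S \<inter> Y) \<le> n"
      using bb fin(1) card_mono[of Y "S \<inter> Y"] by (auto simp: balanced_bipartite_def)
    ultimately show ?thesis
      using degree_le_neighbours_in_plus_outside[OF bb IntD2[OF that] S(1)] by arith
  qed
  then have "(\<Sum>x\<in>S \<inter> X. m + card (S \<inter> Y)) \<le> (\<Sum>x\<in>S \<inter> X. card {u \<in> S - X. R x u} + n)"
    by (intro sum_mono) auto
  ultimately have "card (S \<inter> X) * (m + card (S \<inter> Y)) \<le> n + card (S \<inter> X) * n"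
    using S(2) by (simp add: sum.distrib)
  moreover have "card (S \<inter> X) + card (S \<inter> Y) = n + 1" using card_Int_parts[OF bb S(1)] S(2) by simp
  ultimately show False using parts_ge_2_arith[OF _ a] deg unfolding m_def by fastforce
qed

lemma not_induced_forest_if_parts_ge_2:
  assumes bb: "balanced_bipartite n X Y E" and "n + 3 \<le> 2 * min_degree (X \<union> Y) E"
    and "S \<subseteq> X \<union> Y" "card S = n + 1" "2 \<le> card (S \<inter> X)" "2 \<le> card (S \<inter> Y)"
  shows "\<not> induced_forest E S"
proof (cases "card (S \<inter> X) \<le> card (S \<inter> Y)")
  case True
  then show ?thesis using not_induced_forest_if_smaller_part_ge_2[OF bb] assms by blast
next
  case False
  then show ?thesis
    using not_induced_forest_if_smaller_part_ge_2[OF balanced_bipartite_swap[OF bb]] assms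
    by (simp add: Un_commute)
qed

lemma induced_forest_if_part_le_1:
  assumes bb: "balanced_bipartite n V1 V2 E" and "S \<subseteq> V1 \<union> V2" "card (S \<inter> V1) \<le> 1"
  shows "induced_forest E S"
  unfolding induced_forest_def
proof
  assume "\<exists>cs. is_cycle S (\<lambda>u v. u \<in> S \<and> v \<in> S \<and> E u v) cs"
  then obtain cs where cs: "is_cycle S (\<lambda>u v. u \<in> S \<and> v \<in> S \<and> E u v) cs" by blast
  have "2 \<le> card (set cs \<inter> V1)"
    using card_cycle_Int_ge_2[OF cs] balanced_bipartite_edge_crosses[OF bb] by blast
  moreover have "card (set cs \<inter> V1) \<le> card (S \<inter> V1)"
    using cs balanced_bipartite_finite[OF bb] assms(2)
    by (intro card_mono) (auto simp: is_cycle_def intro: finite_subset)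
  ultimately show False using assms(3) by simp
qed

theorem corollary2p5:
  fixes n :: nat and V1 V2 S :: "'a set" and E :: "'a \<Rightarrow> 'a \<Rightarrow> bool"
  assumes "odd n" and "n > 0"
    and "balanced_bipartite n V1 V2 E"
    and "real (min_degree (V1 \<union> V2) E) \<ge> real n / 2 + 1"
    and "S \<subseteq> V1 \<union> V2" and "card S = n + 1"
  shows "induced_forest E S \<longleftrightarrow> min (card (S \<inter> V1)) (card (S \<inter> V2)) = 1"
proof -
  note bb = assms(3)
  have "n + 2 \<le> 2 * min_degree (V1 \<union> V2) E" using assms(4) by linarith
  then have deg: "n + 3 \<le> 2 * min_degree (V1 \<union> V2) E" using \<open>odd n\<close> by presburger
  have "card (S \<inter> V1) \<le> n" "card (S \<inter> V2) \<le> n"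
    using bb balanced_bipartite_finite[OF bb] card_mono[of V1 "S \<inter> V1"] card_mono[of V2 "S \<inter> V2"]
    by (auto simp: balanced_bipartite_def)
  moreover have "card (S \<inter> V1) + card (S \<inter> V2) = n + 1"
    using card_Int_parts[OF bb assms(5)] assms(6) by simp
  ultimately have parts_pos: "1 \<le> card (S \<inter> V1)" "1 \<le> card (S \<inter> V2)" by linarith+
  show ?thesis
  proof
    assume "induced_forest E S"
    then have "\<not> (2 \<le> card (S \<inter> V1) \<and> 2 \<le> card (S \<inter> V2))"
      using not_induced_forest_if_parts_ge_2[OF bb deg assms(5,6)] by blast
    with parts_pos show "min (card (S \<inter> V1)) (card (S \<inter> V2)) = 1" by linarith
  next
    assume "min (card (S \<inter> V1)) (card (S \<inter> V2)) = 1"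
    then have "card (S \<inter> V1) \<le> 1 \<or> card (S \<inter> V2) \<le> 1" by linarith
    then show "induced_forest E S"
      using induced_forest_if_part_le_1[OF bb assms(5)]
        induced_forest_if_part_le_1[OF balanced_bipartite_swap[OF bb]] assms(5)
      by (auto simp: Un_commute)
  qed
qed

end
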